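(* $MR(4) = 5$; that is, every extremal point of $\Gamma(4)$ has rank at most $5$, and there exists an extremal point of $\Gamma(4)$ of rank exactly $5$.
   Context: A state $\rho$ on $M_n(\mathbb{C}) \otimes M_n(\mathbb{C})$ is a marginal tracial state if $\rho(A\otimes I) = \mathrm{tr}(A)$ and $\rho(I \otimes B) = \mathrm{tr}(B)$ for all $A,B \in M_n(\mathbb{C})$, where $\mathrm{tr}$ is the normalized trace. $\Gamma(n)$ is the convex set of all marginal tracial states on $M_n(\mathbb{C}) \otimes M_n(\mathbb{C})$. For a state $\rho$, $\mathrm{rank}(\rho)$ is the rank of its density matrix. $MR(n)$ denotes the maximum of $\mathrm{rank}(\rho)$ over all extremal points $\rho$ of $\Gamma(n)$. *)

theory Defs
  imports "HOL-Analysis.Analysis"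
begin

text \<open>Matrices in M_n(C) are complex^'n^'n (n = CARD('n)); matrices in
M_n(C) \<otimes> M_n(C) = M_{n^2}(C) are indexed by pairs: complex^('n*'n)^('n*'n).
A state on M_n \<otimes> M_n is represented by its density matrix D, via
rho_D(X) = Tr(D X).\<close>

definition mtrace :: "complex^'m^'m \<Rightarrow> complex" where
  "mtrace A = (\<Sum>i\<in>UNIV. A $ i $ i)"

definition ntrace :: "complex^'n^'n \<Rightarrow> complex" where
  "ntrace A = mtrace A / of_nat CARD('n)"

definition tensor :: "complex^'n^'n \<Rightarrow> complex^'n^'n \<Rightarrow> complex^('n\<times>'n)^('n\<times>'n)" where
  "tensor A B = (\<chi> p. \<chi> q. A $ fst p $ fst q * B $ snd p $ snd q)"

definition psd :: "complex^'m^'m \<Rightarrow> bool" where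
  "psd D \<longleftrightarrow> (\<forall>v. Im (\<Sum>i\<in>UNIV. \<Sum>j\<in>UNIV. cnj (v $ i) * D $ i $ j * v $ j) = 0
                \<and> 0 \<le> Re (\<Sum>i\<in>UNIV. \<Sum>j\<in>UNIV. cnj (v $ i) * D $ i $ j * v $ j))"

definition density_matrix :: "complex^'m^'m \<Rightarrow> bool" where
  "density_matrix D \<longleftrightarrow> psd D \<and> mtrace D = 1"

definition state_of :: "complex^'m^'m \<Rightarrow> complex^'m^'m \<Rightarrow> complex" where
  "state_of D X = mtrace (D ** X)"

definition marginal_tracial :: "complex^('n::finite\<times>'n)^('n\<times>'n) \<Rightarrow> bool" where
  "marginal_tracial D \<longleftrightarrow> density_matrix D
     \<and> (\<forall>A::complex^'n^'n. state_of D (tensor A (mat 1)) = ntrace A)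
     \<and> (\<forall>B::complex^'n^'n. state_of D (tensor (mat 1) B) = ntrace B)"

definition Gamma :: "(complex^('n::finite\<times>'n)^('n\<times>'n)) set" where
  "Gamma = {D. marginal_tracial D}"

end

theory Submission
  imports Defs
begin

text \<open>
  A state on \<open>M\<^sub>n \<otimes> M\<^sub>n\<close> is represented by its density matrix \<open>D\<close>; it lies
  in \<open>\<Gamma>(n)\<close> iff \<open>D\<close> is positive semidefinite and both partial traces of \<open>D\<close> equal \<open>I/n\<close>
  (lemma Gamma_iff).

  Upper bound (dimension count).  If \<open>D \<in> \<Gamma>(n)\<close> has rank \<open>\<ge> r\<close>, pick \<open>r\<close> independent columns
  of \<open>D\<close>; the matrices \<open>D E K E\<^sup>* D\<close> with \<open>K\<close> Hermitian \<open>r \<times> r\<close> form a real space of dimension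
  \<open>r\<^sup>2\<close>, while vanishing of both partial traces imposes only \<open>2n\<^sup>2\<close> real linear conditions.
  For \<open>r\<^sup>2 > 2n\<^sup>2\<close> a nonzero such direction \<open>H\<close> exists; as \<open>|v\<^sup>* H v| \<le> C v\<^sup>* D v\<close>, the points
  \<open>D \<plusminus> \<epsilon>H\<close> stay in \<open>\<Gamma>(n)\<close>, so \<open>D\<close> is not extreme (large_rank_not_extreme).  For \<open>n = 4\<close>,
  \<open>r = 6\<close> gives \<open>36 > 32\<close>.

  Lower bound (explicit witness).  \<open>D\<^sub>0 = (1/12) \<Sum>\<^sub>k w\<^sub>k w\<^sub>k\<^sup>T\<close> for five 0/1 vectors \<open>w\<^sub>k\<close> on
  the \<open>4 \<times> 4\<close> grid has rank 5 and lies in \<open>\<Gamma>(4)\<close>.  Any \<open>a \<in> \<Gamma>(4)\<close> whose kernel contains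
  \<open>ker D\<^sub>0\<close> has the form \<open>\<Sum>\<^sub>i\<^sub>j K\<^sub>i\<^sub>j w\<^sub>i w\<^sub>j\<^sup>T\<close>, and the partial-trace equations force
  \<open>K = I/12\<close>; by the kernel criterion for faces of the PSD cone, \<open>D\<^sub>0\<close> is extreme.
\<close>

definition sesq :: "complex^'m^'m \<Rightarrow> complex^'m \<Rightarrow> complex^'m \<Rightarrow> complex" where
  "sesq D u v = (\<Sum>i\<in>UNIV. \<Sum>j\<in>UNIV. cnj (u $ i) * D $ i $ j * v $ j)"

abbreviation quad :: "complex^'m^'m \<Rightarrow> complex^'m \<Rightarrow> complex" where
  "quad D v \<equiv> sesq D v v"

lemma psd_iff_quad: "psd D \<longleftrightarrow> (\<forall>v. Im (quad D v) = 0 \<and> 0 \<le> Re (quad D v))"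
  by (simp add: psd_def sesq_def)

lemma psd_quad_Im: "psd D \<Longrightarrow> Im (quad D v) = 0"
  and psd_quad_Re: "psd D \<Longrightarrow> 0 \<le> Re (quad D v)"
  by (simp_all add: psd_iff_quad)

lemma sesq_add_left: "sesq D (u + u') v = sesq D u v + sesq D u' v"
  and sesq_add_right: "sesq D u (v + v') = sesq D u v + sesq D u v'"
  and sesq_scale_left: "sesq D (c *s u) v = cnj c * sesq D u v"
  and sesq_scale_right: "sesq D u (c *s v) = c * sesq D u v"
  by (simp_all add: sesq_def algebra_simps sum.distrib sum_distrib_left)

lemmas sesq_linear = sesq_add_left sesq_add_right sesq_scale_left sesq_scale_right

lemma sesq_add_matrix: "sesq (A + B) u v = sesq A u v + sesq B u v"
  and sesq_scaleR_matrix: "sesq (t *\<^sub>R A) u v = of_real t * sesq A u v"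
  by (simp_all add: sesq_def algebra_simps sum.distrib sum_distrib_left
      vector_scaleR_component scaleR_conv_of_real[where 'a=complex])

lemma sesq_axis_left: "sesq D (axis p 1) v = (D *v v) $ p"
proof -
  have "sesq D (axis p 1) v = (\<Sum>i\<in>UNIV. if i = p then (\<Sum>j\<in>UNIV. D $ i $ j * v $ j) else 0)"
    unfolding sesq_def by (rule sum.cong) (auto simp: axis_def sum_distrib_left)
  then show ?thesis by (simp add: matrix_vector_mult_def)
qed

lemma mv_axis: "(M *v axis q (1::complex)) $ p = M $ p $ q"
  by (simp add: matrix_vector_mult_def axis_def if_distrib[where f="\<lambda>x. _ * x"] cong: if_cong)

lemma sesq_mv_right: "sesq D u v = (\<Sum>i\<in>UNIV. cnj (u $ i) * (D *v v) $ i)"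
  by (simp add: sesq_def matrix_vector_mult_def sum_distrib_left mult.assoc)

lemma sesq_axis_axis: "sesq D (axis i 1) (axis j 1) = D $ i $ j"
  by (simp add: sesq_axis_left mv_axis)

text \<open>Polarisation: a positive semidefinite matrix is Hermitian.\<close>
lemma psd_sesq_conj:
  assumes "psd D" shows "sesq D u v = cnj (sesq D v u)"
proof -
  have "Im (quad D (u + v)) = 0" "Im (quad D (u + \<i> *s v)) = 0" "Im (quad D u) = 0" "Im (quad D v) = 0"
    using psd_quad_Im[OF assms] by auto
  then have "Im (sesq D u v) + Im (sesq D v u) = 0" "Re (sesq D u v) - Re (sesq D v u) = 0"
    by (simp_all add: sesq_linear algebra_simps)
  then show ?thesis by (simp add: complex_eq_iff)
qed

lemma psd_hermitian: "psd D \<Longrightarrow> D $ i $ j = cnj (D $ j $ i)"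
  by (metis sesq_axis_axis psd_sesq_conj)

lemma nonneg_quadratic_no_linear_term:
  fixes a b :: real
  assumes "a \<ge> 0" and nonneg: "\<And>l. a * l^2 + 2 * b * l \<ge> 0"
  shows "b = 0"
proof (rule ccontr)
  assume "b \<noteq> 0"
  define t where "t = 1 / (a + 1)"
  have "t > 0" "a * t < 1" using assms(1) by (simp_all add: t_def field_simps)
  have "a * (- t * b)^2 + 2 * b * (- t * b) = (b^2 * t) * (a * t - 2)"
    by (simp add: power2_eq_square algebra_simps)
  also have "\<dots> < 0"
    using \<open>b \<noteq> 0\<close> \<open>t > 0\<close> \<open>a * t < 1\<close> by (intro mult_pos_neg) simp_all
  finally show False using nonneg[of "- t * b"] by simp
qed

lemma psd_isotropic_kernel:
  assumes psd: "psd D" and iso: "quad D z = 0"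
  shows "D *v z = 0"
proof -
  have "sesq D y z = 0" for y
  proof -
    have expand: "quad D (z + c *s y) = cnj c * c * quad D y + c * cnj (sesq D y z) + cnj c * sesq D y z"
      for c using iso psd_sesq_conj[OF psd, of z y] by (simp add: sesq_linear algebra_simps)
    have "0 \<le> Re (quad D y) * l^2 + 2 * Re (sesq D y z) * l"
     and "0 \<le> Re (quad D y) * l^2 + 2 * Im (sesq D y z) * l" for l :: real
      using psd_quad_Re[OF psd, of "z + of_real l *s y"] psd_quad_Re[OF psd, of "z + (\<i> * of_real l) *s y"]
      unfolding expand by (simp_all add: power2_eq_square algebra_simps)
    then have "Re (sesq D y z) = 0" "Im (sesq D y z) = 0"
      using nonneg_quadratic_no_linear_term[OF psd_quad_Re[OF psd]] by blast+
    then show ?thesis by (simp add: complex_eq_iff)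
  qed
  then show ?thesis by (metis sesq_axis_left vec_eq_iff zero_index)
qed

lemma psd_segment_kernel:
  assumes "psd a" "psd b" "0 < u" "u < 1" "D = (1 - u) *\<^sub>R a + u *\<^sub>R b" "D *v z = 0"
  shows "a *v z = 0"
proof -
  have "quad D z = 0" using assms(6) by (simp add: sesq_mv_right)
  then have "(1 - u) * Re (quad a z) + u * Re (quad b z) = 0"
    using assms(5) psd_quad_Im[OF assms(1)] psd_quad_Im[OF assms(2)]
    by (simp add: sesq_add_matrix sesq_scaleR_matrix complex_eq_iff)
  moreover have "0 \<le> (1 - u) * Re (quad a z)" "0 \<le> u * Re (quad b z)"
    using psd_quad_Re[OF assms(1)] psd_quad_Re[OF assms(2)] assms(3,4) by simp_all
  ultimately have "(1 - u) * Re (quad a z) = 0" by linarith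
  then have "Re (quad a z) = 0" using assms(4) by simp
  then have "quad a z = 0" using psd_quad_Im[OF assms(1)] by (simp add: complex_eq_iff)
  then show ?thesis by (rule psd_isotropic_kernel[OF assms(1)])
qed

lemma extreme_point_if_kernel_rigid:
  assumes psd: "\<And>a. a \<in> S \<Longrightarrow> psd a" and "D \<in> S"
    and rigid: "\<And>a. a \<in> S \<Longrightarrow> (\<And>z. D *v z = 0 \<Longrightarrow> a *v z = 0) \<Longrightarrow> a = D"
  shows "D extreme_point_of S"
  unfolding extreme_point_of_def
proof (intro conjI ballI \<open>D \<in> S\<close> notI)
  fix a b assume a: "a \<in> S" and b: "b \<in> S" and "D \<in> open_segment a b"
  then obtain u where "a \<noteq> b" "0 < u" "u < 1" and D: "D = (1 - u) *\<^sub>R a + u *\<^sub>R b"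
    by (auto simp: in_segment)
  have D': "D = (1 - (1 - u)) *\<^sub>R b + (1 - u) *\<^sub>R a" using D by (simp add: algebra_simps)
  have "a = D"
    using psd_segment_kernel[OF psd[OF a] psd[OF b] \<open>0 < u\<close> \<open>u < 1\<close> D] by (rule rigid[OF a])
  moreover have "b = D"
    using psd_segment_kernel[OF psd[OF b] psd[OF a] _ _ D'] \<open>0 < u\<close> \<open>u < 1\<close> by (intro rigid[OF b]) simp
  ultimately show False using \<open>a \<noteq> b\<close> by simp
qed

definition marg1 :: "complex^('n::finite\<times>'n)^('n\<times>'n) \<Rightarrow> complex^'n^'n" where
  "marg1 D = (\<chi> x y. \<Sum>z\<in>UNIV. D $ (x,z) $ (y,z))"

definition marg2 :: "complex^('n::finite\<times>'n)^('n\<times>'n) \<Rightarrow> complex^'n^'n" where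
  "marg2 D = (\<chi> x y. \<Sum>z\<in>UNIV. D $ (z,x) $ (z,y))"

lemma sum_UNIV_pair:
  "(\<Sum>p\<in>(UNIV::('a::finite\<times>'b::finite) set). f p) = (\<Sum>x\<in>UNIV. \<Sum>y\<in>UNIV. f (x,y))"
  by (simp add: sum.cartesian_product UNIV_Times_UNIV[symmetric] del: UNIV_Times_UNIV)

lemma marg1_add: "marg1 (A + B) = marg1 A + marg1 B"
  and marg2_add: "marg2 (A + B) = marg2 A + marg2 B"
  by (simp_all add: vec_eq_iff marg1_def marg2_def sum.distrib)

lemma marg1_scaleR: "marg1 (t *\<^sub>R A) = t *\<^sub>R marg1 A"
  and marg2_scaleR: "marg2 (t *\<^sub>R A) = t *\<^sub>R marg2 A"
  by (simp_all add: vec_eq_iff marg1_def marg2_def scaleR_sum_right)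

lemma marg1_hermitian:
  assumes "\<And>p q. H $ p $ q = cnj (H $ q $ p)" shows "marg1 H $ s $ t = cnj (marg1 H $ t $ s)"
proof -
  have "cnj (H $ q $ p) = H $ p $ q" for p q using assms[of p q] by simp
  then show ?thesis by (simp add: marg1_def)
qed

lemma marg2_hermitian:
  assumes "\<And>p q. H $ p $ q = cnj (H $ q $ p)" shows "marg2 H $ s $ t = cnj (marg2 H $ t $ s)"
proof -
  have "cnj (H $ q $ p) = H $ p $ q" for p q using assms[of p q] by simp
  then show ?thesis by (simp add: marg2_def)
qed

lemma state_tensor_left:
  fixes D :: "complex^('n::finite\<times>'n)^('n\<times>'n)"
  shows "state_of D (tensor A (mat 1)) = (\<Sum>x\<in>UNIV. \<Sum>y\<in>UNIV. marg1 D $ x $ y * A $ y $ x)"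
proof -
  have "state_of D (tensor A (mat 1))
      = (\<Sum>x\<in>UNIV. \<Sum>z\<in>UNIV. \<Sum>y\<in>UNIV. \<Sum>z'\<in>UNIV. D$(x,z)$(y,z') * (A$y$x * (if z' = z then 1 else 0)))"
    by (simp add: state_of_def mtrace_def matrix_matrix_mult_def tensor_def mat_def sum_UNIV_pair)
  also have "\<dots> = (\<Sum>x\<in>UNIV. \<Sum>z\<in>UNIV. \<Sum>y\<in>UNIV. D$(x,z)$(y,z) * A$y$x)"
    by (simp add: if_distrib[where f="\<lambda>t. _ * t"] cong: if_cong)
  also have "\<dots> = (\<Sum>x\<in>UNIV. \<Sum>y\<in>UNIV. \<Sum>z\<in>UNIV. D$(x,z)$(y,z) * A$y$x)"
    by (rule sum.cong[OF refl], rule sum.swap)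
  also have "\<dots> = (\<Sum>x\<in>UNIV. \<Sum>y\<in>UNIV. marg1 D $ x $ y * A $ y $ x)"
    by (simp add: marg1_def sum_distrib_right)
  finally show ?thesis .
qed

lemma state_tensor_right:
  fixes D :: "complex^('n::finite\<times>'n)^('n\<times>'n)"
  shows "state_of D (tensor (mat 1) B) = (\<Sum>x\<in>UNIV. \<Sum>y\<in>UNIV. marg2 D $ x $ y * B $ y $ x)"
proof -
  have "state_of D (tensor (mat 1) B)
      = (\<Sum>z\<in>UNIV. \<Sum>x\<in>UNIV. \<Sum>z'\<in>UNIV. \<Sum>y\<in>UNIV. D$(z,x)$(z',y) * ((if z' = z then 1 else 0) * B$y$x))"
    by (simp add: state_of_def mtrace_def matrix_matrix_mult_def tensor_def mat_def sum_UNIV_pair)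
  also have "\<dots> = (\<Sum>z\<in>UNIV. \<Sum>x\<in>UNIV. \<Sum>y\<in>UNIV. D$(z,x)$(z,y) * B$y$x)"
    by (subst sum.swap[where B=UNIV]) (simp add: if_distrib[where f="\<lambda>t. t * _"] if_distrib[where f="\<lambda>t. _ * t"] cong: if_cong)
  also have "\<dots> = (\<Sum>x\<in>UNIV. \<Sum>y\<in>UNIV. \<Sum>z\<in>UNIV. D$(z,x)$(z,y) * B$y$x)"
    by (subst sum.swap, rule sum.cong[OF refl], rule sum.swap)
  also have "\<dots> = (\<Sum>x\<in>UNIV. \<Sum>y\<in>UNIV. marg2 D $ x $ y * B $ y $ x)"
    by (simp add: marg2_def sum_distrib_right)
  finally show ?thesis .
qed

lemma mtrace_marg1: "mtrace D = (\<Sum>x\<in>UNIV. marg1 D $ x $ x)"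
  by (simp add: mtrace_def marg1_def sum_UNIV_pair)

lemma pairing_mat: "(\<Sum>x\<in>UNIV. \<Sum>y\<in>UNIV. mat c $ x $ y * A $ y $ x) = c * mtrace A"
  by (simp add: mat_def mtrace_def sum_distrib_left if_distrib[where f="\<lambda>t. t * _"] cong: if_cong)

definition matrix_unit :: "'n \<Rightarrow> 'n \<Rightarrow> complex^'n^'n" where
  "matrix_unit y x = (\<chi> r s. if r = y \<and> s = x then 1 else 0)"

lemma pairing_matrix_unit: "(\<Sum>x'\<in>UNIV. \<Sum>y'\<in>UNIV. M $ x' $ y' * matrix_unit y x $ y' $ x') = M $ x $ y"
proof -
  have "(\<Sum>y'\<in>UNIV. M $ x' $ y' * matrix_unit y x $ y' $ x') = (if x' = x then M $ x $ y else 0)" for x'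
    by (simp add: matrix_unit_def if_distrib[where f="\<lambda>t. _ * t"] cong: if_cong)
  then show ?thesis by simp
qed

lemma ntrace_matrix_unit:
  "ntrace (matrix_unit y x :: complex^'n::finite^'n) = mat (1 / of_nat CARD('n)) $ x $ y"
proof (cases "x = y")
  case False
  then have "(if i = y \<and> i = x then 1 else 0) = (0::complex)" for i by auto
  then show ?thesis using False by (simp add: ntrace_def mtrace_def matrix_unit_def mat_def)
qed (simp add: ntrace_def mtrace_def matrix_unit_def mat_def)

text \<open>A matrix lies in \<open>\<Gamma>(n)\<close> iff it is positive semidefinite and both its partial traces are
  \<open>I/n\<close>; the trace condition is then automatic.\<close>
lemma Gamma_iff:
  fixes D :: "complex^('n::finite\<times>'n)^('n\<times>'n)"
  shows "D \<in> Gamma \<longleftrightarrow> psd D \<and> marg1 D = mat (1 / of_nat CARD('n)) \<and> marg2 D = mat (1 / of_nat CARD('n))"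
    (is "_ \<longleftrightarrow> _ \<and> _ = ?I \<and> _ = ?I")
proof
  assume "D \<in> Gamma"
  then have D: "psd D" "state_of D (tensor A (mat 1)) = ntrace A" "state_of D (tensor (mat 1) A) = ntrace A"
    for A :: "complex^'n^'n"
    by (auto simp: Gamma_def marginal_tracial_def density_matrix_def)
  have "marg1 D $ x $ y = ?I $ x $ y" "marg2 D $ x $ y = ?I $ x $ y" for x y
    using D(2)[of "matrix_unit y x"] D(3)[of "matrix_unit y x"]
    by (simp_all add: state_tensor_left state_tensor_right pairing_matrix_unit ntrace_matrix_unit)
  then show "psd D \<and> marg1 D = ?I \<and> marg2 D = ?I" using D(1) by (simp add: vec_eq_iff)
next
  assume D: "psd D \<and> marg1 D = ?I \<and> marg2 D = ?I"
  have "mtrace D = 1" using D by (simp add: mtrace_marg1 mat_def)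
  then show "D \<in> Gamma" using D
    by (simp add: Gamma_def marginal_tracial_def density_matrix_def state_tensor_left
        state_tensor_right pairing_mat ntrace_def)
qed

lemma Gamma_perturb:
  fixes D H :: "complex^('n::finite\<times>'n)^('n\<times>'n)"
  assumes "D \<in> Gamma" "marg1 H = 0" "marg2 H = 0" "psd (D + t *\<^sub>R H)"
  shows "D + t *\<^sub>R H \<in> Gamma"
  using assms by (simp add: Gamma_iff marg1_add marg2_add marg1_scaleR marg2_scaleR)

lemma power2_norm_vec: "(norm (w :: complex^'m))^2 = (\<Sum>i\<in>UNIV. (cmod (w $ i))^2)"
  by (simp add: norm_vec_def L2_set_def sum_nonneg)

lemma norm_nth_mult_le: "cmod (w $ i) * cmod (w $ j) \<le> (norm w)^2"
  using Finite_Cartesian_Product.norm_nth_le[of w i] Finite_Cartesian_Product.norm_nth_le[of w j]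
  by (simp add: power2_eq_square mult_mono)

lemma quad_le_entry_sum: "cmod (quad D w) \<le> (\<Sum>i\<in>UNIV. \<Sum>j\<in>UNIV. cmod (D $ i $ j)) * (norm w)^2"
proof -
  have "cmod (quad D w) \<le> (\<Sum>i\<in>UNIV. \<Sum>j\<in>UNIV. cmod (cnj (w $ i) * D $ i $ j * w $ j))"
    unfolding sesq_def by (rule order_trans[OF norm_sum sum_mono[OF norm_sum]])
  also have "\<dots> \<le> (\<Sum>i\<in>UNIV. \<Sum>j\<in>UNIV. cmod (D $ i $ j) * (norm w)^2)"
  proof (intro sum_mono)
    fix i j
    have "cmod (cnj (w $ i) * D $ i $ j * w $ j) = cmod (D $ i $ j) * (cmod (w $ i) * cmod (w $ j))"
      by (simp add: norm_mult)
    then show "cmod (cnj (w $ i) * D $ i $ j * w $ j) \<le> cmod (D $ i $ j) * (norm w)^2"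
      by (simp add: mult_left_mono norm_nth_mult_le)
  qed
  finally show ?thesis by (simp add: sum_distrib_right)
qed

text \<open>\<open>(D v)\<^sup>* D v = \<parallel>D v\<parallel>\<^sup>2\<close> for Hermitian \<open>D\<close>; here it is stated without symmetry as
  \<open>sesq D (D v) v\<close>, which needs no assumption.\<close>
lemma sesq_image_left: "sesq D (D *v v) v = of_real ((norm (D *v v))^2)"
proof -
  have "sesq D (D *v v) v = (\<Sum>i\<in>UNIV. of_real ((cmod ((D *v v) $ i))^2))"
    unfolding sesq_mv_right by (intro sum.cong refl) (metis complex_norm_square mult.commute)
  then show ?thesis by (simp add: power2_norm_vec)
qed

text \<open>For positive semidefinite \<open>D\<close>, \<open>\<parallel>D v\<parallel>\<^sup>2\<close> is dominated by \<open>v\<^sup>* D v\<close>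
  (the sharp constant is the largest eigenvalue; any explicit bound suffices here).\<close>
lemma psd_image_norm_bound:
  assumes psd: "psd D"
  shows "(norm (D *v v))^2 \<le> (1 + (\<Sum>i\<in>UNIV. \<Sum>j\<in>UNIV. cmod (D $ i $ j)))^2 * Re (quad D v)"
proof -
  define G where "G = (\<Sum>i\<in>UNIV. \<Sum>j\<in>UNIV. cmod (D $ i $ j))"
  define w where "w = D *v v"
  define N where "N = (norm w)^2"
  define l where "l = 1 + G"
  have "G \<ge> 0" by (simp add: G_def sum_nonneg)
  have wv: "sesq D w v = of_real N" and vw: "sesq D v w = of_real N"
    using sesq_image_left[of D v] psd_sesq_conj[OF psd, of v w] by (simp_all add: w_def N_def)
  have "quad D (w + c *s v) = quad D w + c * sesq D w v + cnj c * sesq D v w + cnj c * c * quad D v" for c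
    by (simp add: sesq_linear algebra_simps)
  from this[of "of_real (- l)"]
  have "quad D (w + of_real (- l) *s v) = quad D w + of_real (l^2) * quad D v - of_real (2 * l * N)"
    unfolding wv vw by (simp add: power2_eq_square algebra_simps)
  then have "0 \<le> Re (quad D w) + l^2 * Re (quad D v) - 2 * l * N"
    using psd_quad_Re[OF psd, of "w + of_real (- l) *s v"] by simp
  moreover have "Re (quad D w) \<le> G * N"
    using quad_le_entry_sum[of D w] complex_Re_le_cmod[of "quad D w"] by (simp add: G_def N_def)
  ultimately have "(2 * l - G) * N \<le> l^2 * Re (quad D v)" by (simp add: algebra_simps)
  moreover have "N \<le> (2 * l - G) * N" using \<open>G \<ge> 0\<close> by (simp add: l_def N_def algebra_simps)
  ultimately have "N \<le> l^2 * Re (quad D v)" by linarith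
  then show ?thesis unfolding N_def w_def l_def G_def .
qed

lemma hermitian_quad_real:
  assumes "\<And>p q. H $ p $ q = cnj (H $ q $ p)"
  shows "Im (quad H v) = 0"
proof -
  have hc: "cnj (H $ i $ j) = H $ j $ i" for i j using assms[of j i] by simp
  have "cnj (quad H v) = (\<Sum>i\<in>UNIV. \<Sum>j\<in>UNIV. v $ i * H $ j $ i * cnj (v $ j))"
    unfolding sesq_def by (simp add: hc)
  also have "\<dots> = (\<Sum>j\<in>UNIV. \<Sum>i\<in>UNIV. v $ i * H $ j $ i * cnj (v $ j))" by (rule sum.swap)
  also have "\<dots> = quad H v" unfolding sesq_def by (simp add: mult_ac)
  finally show ?thesis by (metis Reals_cnj_iff complex_is_Real_iff)
qed

lemma psd_dominated_perturbation:
  assumes psd: "psd D" and herm: "\<And>p q. H $ p $ q = cnj (H $ q $ p)"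
    and dom: "\<And>v. cmod (quad H v) \<le> C * Re (quad D v)"
  obtains e :: real where "e > 0" "\<And>t. \<bar>t\<bar> \<le> e \<Longrightarrow> psd (D + t *\<^sub>R H)"
proof
  define e where "e = 1 / (\<bar>C\<bar> + 1)"
  show "e > 0" by (simp add: e_def add_pos_nonneg)
  fix t :: real assume t: "\<bar>t\<bar> \<le> e"
  show "psd (D + t *\<^sub>R H)" unfolding psd_iff_quad
  proof (intro allI conjI)
    fix v
    show "Im (quad (D + t *\<^sub>R H) v) = 0"
      using psd_quad_Im[OF psd] hermitian_quad_real[OF herm] by (simp add: sesq_add_matrix sesq_scaleR_matrix)
    have "\<bar>Re (quad H v)\<bar> \<le> \<bar>C\<bar> * Re (quad D v)"
      using abs_Re_le_cmod[of "quad H v"] dom[of v] psd_quad_Re[OF psd, of v]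
      by (meson abs_ge_self mult_right_mono order_trans)
    then have "\<bar>t * Re (quad H v)\<bar> \<le> e * (\<bar>C\<bar> * Re (quad D v))"
      unfolding abs_mult using t by (intro mult_mono) simp_all
    also have "\<dots> \<le> Re (quad D v)"
      using psd_quad_Re[OF psd, of v] by (simp add: e_def field_simps)
    finally show "0 \<le> Re (quad (D + t *\<^sub>R H) v)"
      by (simp add: sesq_add_matrix sesq_scaleR_matrix)
  qed
qed

lemma not_extreme_if_two_sided:
  fixes x h :: "'a::real_vector"
  assumes "h \<noteq> 0" "e \<noteq> 0" "x + e *\<^sub>R h \<in> S" "x - e *\<^sub>R h \<in> S"
  shows "\<not> x extreme_point_of S"
proof -
  have "(x + e *\<^sub>R h) - (x - e *\<^sub>R h) = 2 *\<^sub>R (e *\<^sub>R h)"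
    by (simp add: scaleR_2 del: scaleR_scaleR)
  then have "x + e *\<^sub>R h \<noteq> x - e *\<^sub>R h" using assms(1,2) by (metis diff_self scaleR_eq_0_iff zero_neq_numeral)
  moreover have "midpoint (x + e *\<^sub>R h) (x - e *\<^sub>R h) = x"
    unfolding midpoint_def by (simp add: scaleR_2[symmetric] scaleR_add_right[symmetric] del: scaleR_add_right)
  ultimately have "x \<in> open_segment (x + e *\<^sub>R h) (x - e *\<^sub>R h)"
    using midpoint_in_open_segment by metis
  then show ?thesis using assms(3,4) unfolding extreme_point_of_def by blast
qed

lemma quad_outer_sum:
  fixes f g :: "'k \<Rightarrow> 'm::finite \<Rightarrow> complex"
  shows "quad (\<chi> p q. \<Sum>k\<in>K. c k * f k p * cnj (g k q)) v
       = (\<Sum>k\<in>K. c k * (\<Sum>p\<in>UNIV. cnj (v $ p) * f k p) * cnj (\<Sum>q\<in>UNIV. cnj (v $ q) * g k q))"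
proof -
  have "quad (\<chi> p q. \<Sum>k\<in>K. c k * f k p * cnj (g k q)) v
      = (\<Sum>p\<in>UNIV. \<Sum>q\<in>UNIV. \<Sum>k\<in>K. c k * (cnj (v $ p) * f k p) * (cnj (g k q) * v $ q))"
    by (simp add: sesq_def sum_distrib_left sum_distrib_right mult_ac)
  also have "\<dots> = (\<Sum>p\<in>UNIV. \<Sum>k\<in>K. \<Sum>q\<in>UNIV. c k * (cnj (v $ p) * f k p) * (cnj (g k q) * v $ q))"
    by (rule sum.cong[OF refl], rule sum.swap)
  also have "\<dots> = (\<Sum>k\<in>K. \<Sum>p\<in>UNIV. \<Sum>q\<in>UNIV. c k * (cnj (v $ p) * f k p) * (cnj (g k q) * v $ q))"
    by (rule sum.swap)
  also have "\<dots> = (\<Sum>k\<in>K. c k * (\<Sum>p\<in>UNIV. cnj (v $ p) * f k p) * (\<Sum>q\<in>UNIV. cnj (g k q) * v $ q))"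
  proof -
    have "a * sum f' UNIV * sum g' UNIV = (\<Sum>p\<in>UNIV. \<Sum>q\<in>UNIV. a * f' p * g' q)"
      for a :: complex and f' g' :: "'m \<Rightarrow> complex"
      by (simp only: mult.assoc sum_product, simp only: sum_distrib_left)
    then show ?thesis by (simp only:)
  qed
  finally show ?thesis by (simp add: mult.commute)
qed

text \<open>A real-linear parametrisation of the Hermitian \<open>r \<times> r\<close> matrices by \<open>\<real>\<^sup>r\<^sup>\<times>\<^sup>r\<close>; it is
  injective, so this real vector space has dimension \<open>r\<^sup>2\<close>.\<close>
definition herm_param :: "real^('r::finite\<times>'r) \<Rightarrow> 'r \<Rightarrow> 'r \<Rightarrow> complex" where
  "herm_param x a b = of_real (x$(a,b) + x$(b,a)) + \<i> * of_real (x$(a,b) - x$(b,a))"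

lemma herm_param_add: "herm_param (x + y) a b = herm_param x a b + herm_param y a b"
  and herm_param_scaleR: "herm_param (t *\<^sub>R x) a b = of_real t * herm_param x a b"
  and herm_param_conj: "cnj (herm_param x a b) = herm_param x b a"
  by (simp_all add: herm_param_def algebra_simps)

lemma herm_param_eq_0:
  assumes "\<And>a b. herm_param x a b = 0" shows "x = 0"
proof -
  have "x$(a,b) + x$(b,a) = 0" "x$(a,b) - x$(b,a) = 0" for a b
    using assms[of a b] by (simp_all add: herm_param_def complex_eq_iff)
  then show ?thesis by (simp add: vec_eq_iff)
qed

text \<open>The perturbation direction \<open>D E K E\<^sup>* D\<close>, where \<open>E\<close> selects the columns \<open>jj\<close> of \<open>D\<close> and
  \<open>K = herm_param x\<close>: a Hermitian matrix supported on the range of \<open>D\<close>.\<close>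
definition perturb :: "complex^'m::finite^'m \<Rightarrow> ('r::finite \<Rightarrow> 'm) \<Rightarrow> real^('r\<times>'r) \<Rightarrow> complex^'m^'m" where
  "perturb D jj x = (\<chi> p q. \<Sum>a\<in>UNIV. \<Sum>b\<in>UNIV. herm_param x a b * D $ p $ jj a * cnj (D $ q $ jj b))"

lemma perturb_add: "perturb D jj (x + y) = perturb D jj x + perturb D jj y"
  by (simp add: vec_eq_iff perturb_def herm_param_add algebra_simps sum.distrib)

lemma perturb_scaleR: "perturb D jj (t *\<^sub>R x) = t *\<^sub>R perturb D jj x"
  by (simp add: vec_eq_iff perturb_def herm_param_scaleR scaleR_conv_of_real[where 'a=complex]
      sum_distrib_left mult.assoc)

lemma perturb_hermitian: "perturb D jj x $ p $ q = cnj (perturb D jj x $ q $ p)"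
proof -
  have "cnj (perturb D jj x $ q $ p) = (\<Sum>a\<in>UNIV. \<Sum>b\<in>UNIV. herm_param x b a * cnj (D $ q $ jj a) * D $ p $ jj b)"
    by (simp add: perturb_def herm_param_conj)
  also have "\<dots> = (\<Sum>b\<in>UNIV. \<Sum>a\<in>UNIV. herm_param x b a * cnj (D $ q $ jj a) * D $ p $ jj b)"
    by (rule sum.swap)
  finally show ?thesis by (simp add: perturb_def mult_ac)
qed

lemma quad_perturb_bound:
  assumes psd: "psd D"
  shows "cmod (quad (perturb D jj x) v)
           \<le> (\<Sum>a\<in>UNIV. \<Sum>b\<in>UNIV. cmod (herm_param x a b)) * (norm (D *v v))^2"
proof -
  define w where "w = D *v v"
  have col: "(\<Sum>p\<in>UNIV. cnj (v $ p) * D $ p $ j) = cnj (w $ j)" for j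
    using psd_hermitian[OF psd, of _ j] by (simp add: w_def matrix_vector_mult_def mult.commute)
  have "perturb D jj x = (\<chi> p q. \<Sum>k\<in>UNIV. herm_param x (fst k) (snd k) * D $ p $ jj (fst k) * cnj (D $ q $ jj (snd k)))"
    by (simp add: perturb_def sum_UNIV_pair)
  then have "quad (perturb D jj x) v = (\<Sum>k\<in>UNIV. herm_param x (fst k) (snd k) * cnj (w $ jj (fst k)) * w $ jj (snd k))"
    using quad_outer_sum[where c = "\<lambda>k. herm_param x (fst k) (snd k)" and f = "\<lambda>k p. D $ p $ jj (fst k)"
        and g = "\<lambda>k q. D $ q $ jj (snd k)" and K = UNIV and v = v]
    by (simp add: col)
  also have "cmod \<dots> \<le> (\<Sum>k\<in>UNIV. cmod (herm_param x (fst k) (snd k)) * (norm w)^2)"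
    by (rule order_trans[OF norm_sum sum_mono])
       (simp add: norm_mult mult.assoc mult_left_mono norm_nth_mult_le)
  finally show ?thesis by (simp add: w_def sum_UNIV_pair sum_distrib_right)
qed

lemma independent_rows_of_rank:
  fixes D :: "complex^'n::finite^'m::finite"
  assumes "CARD('r) \<le> rank D"
  obtains jj :: "'r::finite \<Rightarrow> 'm" where "\<And>c. (\<Sum>a\<in>UNIV. c a *s row (jj a) D) = 0 \<Longrightarrow> \<forall>a. c a = 0"
proof -
  obtain B where B: "B \<subseteq> rows D" "vec.independent B" "card B = vec.dim (rows D)"
    by (rule vec.basis_exists[of "rows D"])
  then have "CARD('r) \<le> card B" using assms by (simp add: row_rank_def_gen)
  then obtain T where T: "T \<subseteq> B" "card T = CARD('r)" "finite T"
    by (rule obtain_subset_with_card_n)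
  have indep: "vec.independent T" using vec.independent_mono[OF B(2) T(1)] .
  obtain h where h: "bij_betw h (UNIV::'r set) T"
    using finite_same_card_bij[of "UNIV::'r set" T] T by auto
  then have inj: "inj h" and Th: "T = range h" by (auto simp: bij_betw_def)
  have "\<exists>i. h a = row i D" for a
    using h T(1) B(1) by (auto simp: bij_betw_def rows_def)
  then obtain jj where jj: "\<And>a. row (jj a) D = h a" by metis
  show ?thesis
  proof (rule that)
    fix c :: "'r \<Rightarrow> complex"
    assume "(\<Sum>a\<in>UNIV. c a *s row (jj a) D) = 0"
    then have sum0: "(\<Sum>v\<in>T. c (inv h v) *s v) = 0"
      unfolding Th by (simp add: sum.reindex[OF inj] jj inv_f_f[OF inj])
    have "\<forall>v\<in>T. c (inv h v) = 0"
    proof (rule ccontr)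
      assume "\<not> (\<forall>v\<in>T. c (inv h v) = 0)"
      with sum0 have "vec.dependent T"
        unfolding vec.dependent_finite[OF T(3)] by (intro exI[of _ "\<lambda>v. c (inv h v)"]) blast
      with indep show False by simp
    qed
    then show "\<forall>a. c a = 0"
      unfolding Th by (simp add: inv_f_f[OF inj])
  qed
qed

lemma perturb_eq_0:
  fixes D :: "complex^'m::finite^'m"
  assumes psd: "psd D" and ind: "\<And>c. (\<Sum>a\<in>UNIV. c a *s row (jj a) D) = 0 \<Longrightarrow> \<forall>a. c a = 0"
    and zero: "perturb D jj x = 0"
  shows "x = 0"
proof -
  have hc: "cnj (D $ q $ p) = D $ p $ q" for p q using psd_hermitian[OF psd, of p q] by simp
  define c where "c a q = (\<Sum>b\<in>UNIV. herm_param x a b * cnj (D $ q $ jj b))" for a q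
  have "(\<Sum>a\<in>UNIV. cnj (c a q) *s row (jj a) D) $ p = cnj (perturb D jj x $ p $ q)" for p q
  proof -
    have "(\<Sum>a\<in>UNIV. cnj (c a q) *s row (jj a) D) $ p = (\<Sum>a\<in>UNIV. cnj (c a q) * cnj (D $ p $ jj a))"
      by (simp add: sum_component row_def hc)
    also have "\<dots> = cnj (\<Sum>a\<in>UNIV. c a q * D $ p $ jj a)" by simp
    also have "(\<Sum>a\<in>UNIV. c a q * D $ p $ jj a) = perturb D jj x $ p $ q"
      by (simp add: c_def perturb_def sum_distrib_left sum_distrib_right mult_ac)
    finally show ?thesis .
  qed
  then have "cnj (c a q) = 0" for a q
    using ind[of "\<lambda>a. cnj (c a q)"] zero by (simp add: vec_eq_iff)
  moreover have "(\<Sum>b\<in>UNIV. herm_param x a b *s row (jj b) D) $ q = c a q" for a q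
    by (simp add: sum_component row_def c_def hc)
  ultimately have "herm_param x a b = 0" for a b
    using ind[of "herm_param x a"] by (simp add: vec_eq_iff)
  then show ?thesis by (rule herm_param_eq_0)
qed

text \<open>An order-free real-linear code of \<open>n \<times> n\<close> matrices in \<open>\<real>\<^sup>n\<^sup>\<times>\<^sup>n\<close>, injective on Hermitian
  matrices (the real vector space of Hermitian \<open>n \<times> n\<close> matrices has dimension \<open>n\<^sup>2\<close>).\<close>
definition hcode :: "complex^'n^'n \<Rightarrow> real^('n\<times>'n)" where
  "hcode M = (\<chi> st. Re (M $ fst st $ snd st) + Im (M $ fst st $ snd st))"

lemma hcode_add: "hcode (A + B) = hcode A + hcode B"
  and hcode_scaleR: "hcode (t *\<^sub>R A) = t *\<^sub>R hcode A"
  by (simp_all add: vec_eq_iff hcode_def algebra_simps)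

text \<open>On Hermitian matrices \<open>hcode\<close> is injective: the entries \<open>(s,t)\<close> and \<open>(t,s)\<close> of the
  code give \<open>Re M\<^sub>s\<^sub>t \<plusminus> Im M\<^sub>s\<^sub>t\<close>.\<close>
lemma hcode_eq_0:
  assumes herm: "\<And>s t. M $ s $ t = cnj (M $ t $ s)" and zero: "hcode M = 0"
  shows "M = 0"
proof -
  have sum0: "Re (M $ s $ t) + Im (M $ s $ t) = 0" for s t
    using zero unfolding vec_eq_iff by (auto simp: hcode_def)
  have diff0: "Re (M $ s $ t) - Im (M $ s $ t) = 0" for s t
    using sum0[of t s] herm[of t s] by simp
  have "Re (M $ s $ t) = 0 \<and> Im (M $ s $ t) = 0" for s t
    using sum0[of s t] diff0[of s t] by linarith
  then show ?thesis by (simp add: vec_eq_iff complex_eq_iff)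
qed

text \<open>The partial-trace conditions on \<open>perturb D jj x\<close>, as \<open>2 n\<^sup>2\<close> real linear equations in \<open>x\<close>.\<close>
definition marginal_constraints ::
    "complex^('n::finite\<times>'n)^('n\<times>'n) \<Rightarrow> ('r::finite \<Rightarrow> 'n\<times>'n) \<Rightarrow> real^('r\<times>'r) \<Rightarrow> real^(('n\<times>'n)\<times>bool)" where
  "marginal_constraints D jj x =
     (\<chi> i. if snd i then hcode (marg1 (perturb D jj x)) $ fst i else hcode (marg2 (perturb D jj x)) $ fst i)"

lemma marginal_constraints_linear: "linear (marginal_constraints D jj)"
proof (rule linearI)
  show "marginal_constraints D jj (x + y) = marginal_constraints D jj x + marginal_constraints D jj y" for x y
    by (simp add: vec_eq_iff marginal_constraints_def perturb_add marg1_add marg2_add hcode_add)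
  show "marginal_constraints D jj (t *\<^sub>R x) = t *\<^sub>R marginal_constraints D jj x" for t x
    by (simp add: vec_eq_iff marginal_constraints_def perturb_scaleR marg1_scaleR marg2_scaleR hcode_scaleR)
qed

lemma marginal_constraints_eq_0:
  assumes zero: "marginal_constraints D jj x = 0"
  shows "marg1 (perturb D jj x) = 0" "marg2 (perturb D jj x) = 0"
proof -
  have "hcode (marg1 (perturb D jj x)) $ st = marginal_constraints D jj x $ (st, True)"
   and "hcode (marg2 (perturb D jj x)) $ st = marginal_constraints D jj x $ (st, False)" for st
    by (simp_all add: marginal_constraints_def)
  then have "hcode (marg1 (perturb D jj x)) = 0" "hcode (marg2 (perturb D jj x)) = 0"
    using zero by (simp_all add: vec_eq_iff)
  then show "marg1 (perturb D jj x) = 0" "marg2 (perturb D jj x) = 0"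
    by (auto intro!: hcode_eq_0 marg1_hermitian marg2_hermitian perturb_hermitian)
qed

lemma linear_nontrivial_kernel:
  fixes f :: "real^'a::finite \<Rightarrow> real^'b::finite"
  assumes lf: "linear f" and card: "CARD('b) < CARD('a)"
  obtains x where "x \<noteq> 0" "f x = 0"
proof -
  have "\<not> inj f"
  proof
    assume inj: "inj f"
    have "independent (f ` Basis)"
      by (rule linear_independent_injective_image[OF lf independent_Basis inj_on_subset[OF inj subset_UNIV]])
    then have "card (f ` Basis) \<le> DIM(real^'b)" using independent_bound by blast
    moreover have "card (f ` Basis) = DIM(real^'a)" using card_image[OF inj_on_subset[OF inj subset_UNIV]] by simp
    ultimately show False using card by simp
  qed
  then show ?thesis using linear_injective_0[OF lf] that by auto
qed

text \<open>Dimension count (upper bound): if \<open>D \<in> \<Gamma>(n)\<close> has rank at least \<open>r\<close> with \<open>r\<^sup>2 > 2n\<^sup>2\<close>,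
  some nonzero Hermitian direction \<open>perturb D jj x\<close> has vanishing partial traces, and \<open>D\<close> can be
  moved along it in both directions inside \<open>\<Gamma>(n)\<close>.\<close>
lemma large_rank_not_extreme:
  fixes D :: "complex^('n::finite\<times>'n)^('n\<times>'n)"
  assumes DG: "D \<in> Gamma" and rank: "CARD('r::finite) \<le> rank D" and dim: "2 * CARD('n)^2 < CARD('r)^2"
  shows "\<not> D extreme_point_of Gamma"
proof -
  have psd: "psd D" using DG by (simp add: Gamma_iff)
  obtain jj :: "'r \<Rightarrow> 'n\<times>'n" where ind: "\<And>c. (\<Sum>a\<in>UNIV. c a *s row (jj a) D) = 0 \<Longrightarrow> \<forall>a. c a = 0"
    using independent_rows_of_rank[OF rank] by blast
  have "CARD(('n\<times>'n)\<times>bool) < CARD('r\<times>'r)" using dim by (simp add: power2_eq_square)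
  then obtain x where "x \<noteq> 0" and x: "marginal_constraints D jj x = 0"
    using linear_nontrivial_kernel[OF marginal_constraints_linear] by blast
  define H where "H = perturb D jj x"
  have "H \<noteq> 0" using perturb_eq_0[OF psd ind] \<open>x \<noteq> 0\<close> by (auto simp: H_def)
  define \<kappa> where "\<kappa> = (\<Sum>a\<in>UNIV. \<Sum>b\<in>UNIV. cmod (herm_param x a b))"
  define G where "G = (1 + (\<Sum>i\<in>UNIV. \<Sum>j\<in>UNIV. cmod (D $ i $ j)))^2"
  have "cmod (quad H v) \<le> (\<kappa> * G) * Re (quad D v)" for v
  proof -
    have "cmod (quad H v) \<le> \<kappa> * (norm (D *v v))^2"
      unfolding H_def \<kappa>_def by (rule quad_perturb_bound[OF psd])
    also have "\<dots> \<le> \<kappa> * (G * Re (quad D v))"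
      unfolding G_def by (intro mult_left_mono psd_image_norm_bound[OF psd]) (simp add: \<kappa>_def sum_nonneg)
    finally show ?thesis by (simp add: mult.assoc)
  qed
  then obtain e where "e > 0" and e: "\<And>t. \<bar>t\<bar> \<le> e \<Longrightarrow> psd (D + t *\<^sub>R H)"
    using psd_dominated_perturbation[OF psd perturb_hermitian] unfolding H_def by blast
  have "D + t *\<^sub>R H \<in> Gamma" if "\<bar>t\<bar> \<le> e" for t
    using Gamma_perturb[OF DG] marginal_constraints_eq_0[OF x] e[OF that] by (simp add: H_def)
  from this[of e] this[of "- e"] show ?thesis
    using not_extreme_if_two_sided[OF \<open>H \<noteq> 0\<close>, of e D Gamma] \<open>e > 0\<close> by simp
qed

lemma psd_gram:
  assumes "\<And>k. 0 \<le> c k"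
  shows "psd ((\<chi> p q. \<Sum>k\<in>K. of_real (c k) * f k p * cnj (f k q)) :: complex^'m::finite^'m)"
proof -
  have "quad ((\<chi> p q. \<Sum>k\<in>K. of_real (c k) * f k p * cnj (f k q)) :: complex^'m^'m) v
      = of_real (\<Sum>k\<in>K. c k * (cmod (\<Sum>p\<in>UNIV. cnj (v $ p) * f k p))^2)" for v
    unfolding quad_outer_sum by (simp only: mult.assoc complex_norm_square[symmetric] of_real_sum of_real_mult)
  then show ?thesis
    unfolding psd_iff_quad using assms by (simp add: sum_nonneg)
qed

lemma sum_UNIV_4: "(\<Sum>x\<in>(UNIV::4 set). f x) = f 1 + f 2 + f 3 + f 4"
  unfolding UNIV_4 by (simp add: add.assoc)

lemma sum_lessThan_5: "(\<Sum>k<5::nat. f k) = f 0 + f 1 + f 2 + f 3 + f 4"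
  by (simp add: numeral_eq_Suc add.assoc)

lemma less_5_cases: "k < (5::nat) \<Longrightarrow> k = 0 \<or> k = 1 \<or> k = 2 \<or> k = 3 \<or> k = 4"
  by auto

text \<open>Each cell meets every row and every column of the grid at most
  once, and every row and column is met by exactly three cells, which makes both partial traces
  equal to \<open>I/4\<close>.\<close>
definition cells :: "nat \<Rightarrow> (4\<times>4) set" where
  "cells k = (if k = 0 then {(2,1),(3,3),(4,4)} else if k = 1 then {(1,4),(2,2)}
     else if k = 2 then {(1,1),(3,2)} else if k = 3 then {(2,4),(3,3),(4,2)} else {(1,3),(4,1)})"

definition cell_vec :: "nat \<Rightarrow> 4\<times>4 \<Rightarrow> complex" where
  "cell_vec k p = (if p \<in> cells k then 1 else 0)"

definition D0 :: "complex^(4\<times>4)^(4\<times>4)" where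
  "D0 = (\<chi> p q. (\<Sum>k<5. cell_vec k p * cell_vec k q) / 12)"

text \<open>Each cell contains a private position, its pivot.\<close>
definition pivot :: "nat \<Rightarrow> 4\<times>4" where
  "pivot k = (if k = 0 then (2,1) else if k = 1 then (1,4) else if k = 2 then (1,1) else if k = 3 then (2,4) else (1,3))"

lemma cell_vec_pivot: "k < 5 \<Longrightarrow> m < 5 \<Longrightarrow> cell_vec m (pivot k) = (if m = k then 1 else 0)"
  using less_5_cases[of k] less_5_cases[of m] by (auto simp: cell_vec_def cells_def pivot_def)

lemma cell_vec_real: "cnj (cell_vec k p) = cell_vec k p"
  by (simp add: cell_vec_def)

lemma D0_psd: "psd D0"
proof -
  have "D0 = (\<chi> p q. \<Sum>k\<in>{..<5}. of_real (1/12) * cell_vec k p * cnj (cell_vec k q))"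
    by (simp add: D0_def cell_vec_real sum_divide_distrib)
  then show ?thesis using psd_gram[where c = "\<lambda>_. 1/12" and K = "{..<5}" and f = cell_vec] by simp
qed

lemma D0_Gamma: "D0 \<in> Gamma"
proof -
  have "marg1 D0 = mat (1/4)" "marg2 D0 = mat (1/4)"
    unfolding vec_eq_iff using exhaust_4
    by (auto simp: marg1_def marg2_def D0_def mat_def sum_UNIV_4 sum_lessThan_5 cell_vec_def cells_def)
  then show ?thesis using D0_psd by (simp add: Gamma_iff)
qed

text \<open>\<open>D\<^sub>0\<close> has rank 5: its row space is spanned by the five cell vectors, and the row at
  \<open>pivot k\<close> is a multiple of \<open>w\<^sub>k\<close>.\<close>
definition cell_vecs :: "nat \<Rightarrow> complex^(4\<times>4)" where
  "cell_vecs k = (\<chi> p. cell_vec k p)"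

lemma row_D0: "row i D0 = (\<Sum>k<5. (cell_vec k i / 12) *s cell_vecs k)"
  by (simp add: vec_eq_iff row_def D0_def cell_vecs_def sum_component sum_divide_distrib)

lemma row_D0_pivot: "k < 5 \<Longrightarrow> row (pivot k) D0 = (1/12) *s cell_vecs k"
  unfolding row_D0 by (simp add: cell_vec_pivot if_distrib[where f="\<lambda>c. (c / 12) *s _"] cong: if_cong)

lemma cell_vecs_inj: "inj_on cell_vecs {..<5}"
proof (rule inj_onI)
  fix m k assume "m \<in> {..<5}" "k \<in> {..<5}" "cell_vecs m = cell_vecs k"
  then have "cell_vecs m $ pivot k = cell_vecs k $ pivot k" by simp
  then have "cell_vec m (pivot k) = cell_vec k (pivot k)" by (simp add: cell_vecs_def)
  then show "m = k" using \<open>m \<in> {..<5}\<close> \<open>k \<in> {..<5}\<close> by (simp add: cell_vec_pivot split: if_splits)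
qed

text \<open>The cell vectors are linearly independent: evaluate a vanishing combination at the pivots.\<close>
lemma cell_vecs_independent: "vec.independent (cell_vecs ` {..<5})"
proof
  assume "vec.dependent (cell_vecs ` {..<5})"
  then obtain u where u: "\<exists>v\<in>cell_vecs ` {..<5}. u v \<noteq> 0"
      and "(\<Sum>v\<in>cell_vecs ` {..<5}. u v *s v) = 0"
    using vec.dependent_finite[of "cell_vecs ` {..<5}"] by auto
  then have combo: "(\<Sum>m<5. u (cell_vecs m) *s cell_vecs m) = 0"
    by (simp add: sum.reindex[OF cell_vecs_inj])
  have "u (cell_vecs k) = 0" if "k < 5" for k
    using arg_cong[OF combo, of "\<lambda>v. v $ pivot k"] that
    by (simp add: sum_component cell_vecs_def cell_vec_pivot if_distrib[where f="\<lambda>c. _ * c"] cong: if_cong)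
  then show False using u by auto
qed

lemma rank_D0: "rank D0 = 5"
proof -
  have "rows D0 \<subseteq> vec.span (cell_vecs ` {..<5})"
  proof
    fix r assume "r \<in> rows D0"
    then obtain i where r: "r = row i D0" by (auto simp: rows_def)
    have "row i D0 \<in> vec.span (cell_vecs ` {..<5})"
      unfolding row_D0 by (intro vec.span_sum vec.span_scale vec.span_base) auto
    then show "r \<in> vec.span (cell_vecs ` {..<5})" by (simp add: r)
  qed
  moreover have "cell_vecs ` {..<5} \<subseteq> vec.span (rows D0)"
  proof
    fix v assume "v \<in> cell_vecs ` {..<5}"
    then obtain k where "k < 5" "v = cell_vecs k" by auto
    then have "v = 12 *s row (pivot k) D0" by (simp add: row_D0_pivot vector_smult_assoc)
    moreover have "row (pivot k) D0 \<in> rows D0" unfolding rows_def by blast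
    ultimately show "v \<in> vec.span (rows D0)" by (simp add: vec.span_base vec.span_scale)
  qed
  ultimately have "vec.span (rows D0) = vec.span (cell_vecs ` {..<5})"
    using vec.span_eq by blast
  then have "vec.dim (rows D0) = card (cell_vecs ` {..<5})"
    using vec.span_eq_dim vec.dim_eq_card_independent[OF cell_vecs_independent] by metis
  then show ?thesis by (simp add: row_rank_def_gen card_image[OF cell_vecs_inj])
qed

lemma D0_pivot_column: "k < 5 \<Longrightarrow> D0 $ p $ pivot k = cell_vec k p / 12"
  by (simp add: D0_def cell_vec_pivot if_distrib[where f="\<lambda>c. _ * c"] cong: if_cong)

definition kernel_vec :: "4\<times>4 \<Rightarrow> complex^(4\<times>4)" where
  "kernel_vec q = axis q 1 - (\<Sum>j<5. cell_vec j q *s axis (pivot j) 1)"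

lemma mv_kernel_vec: "(M *v kernel_vec q) $ p = M $ p $ q - (\<Sum>j<5. cell_vec j q * M $ p $ pivot j)"
  by (simp add: kernel_vec_def matrix_vector_mult_diff_distrib vec.sum vec.scale sum_component
      mv_axis mult.commute)

lemma D0_kernel_vec: "D0 *v kernel_vec q = 0"
proof -
  have "(\<Sum>j<5. cell_vec j q * D0 $ p $ pivot j) = D0 $ p $ q" for p
  proof -
    have "(\<Sum>j<5. cell_vec j q * D0 $ p $ pivot j) = (\<Sum>j<5. cell_vec j q * (cell_vec j p / 12))"
      by (rule sum.cong) (simp_all add: D0_pivot_column)
    also have "\<dots> = D0 $ p $ q" by (simp add: D0_def sum_divide_distrib mult.commute)
    finally show ?thesis .
  qed
  then show ?thesis by (simp add: vec_eq_iff mv_kernel_vec)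
qed

lemma kernel_D0_form:
  assumes herm: "\<And>p q. a $ p $ q = cnj (a $ q $ p)" and ker: "\<And>z. D0 *v z = 0 \<Longrightarrow> a *v z = 0"
  shows "a $ p $ q = (\<Sum>j<5. cell_vec j q * (\<Sum>i<5. cell_vec i p * a $ pivot i $ pivot j))"
proof -
  have col: "a $ p $ q = (\<Sum>j<5. cell_vec j q * a $ p $ pivot j)" for p q
  proof -
    have "(a *v kernel_vec q) $ p = 0" using ker[OF D0_kernel_vec] by simp
    then show ?thesis by (simp add: mv_kernel_vec)
  qed
  have "a $ p $ pivot j = (\<Sum>i<5. cell_vec i p * a $ pivot i $ pivot j)" for j
  proof -
    have hc: "cnj (a $ p $ q) = a $ q $ p" for p q using herm[of q p] by simp
    have "a $ p $ pivot j = cnj (a $ pivot j $ p)" by (rule herm)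
    also have "\<dots> = cnj (\<Sum>i<5. cell_vec i p * a $ pivot j $ pivot i)" by (subst col, rule refl)
    also have "\<dots> = (\<Sum>i<5. cell_vec i p * a $ pivot i $ pivot j)" by (simp add: cell_vec_real hc)
    finally show ?thesis .
  qed
  then show ?thesis by (subst col) simp
qed

lemma all_4: "(\<forall>x::4. P x) \<longleftrightarrow> P 1 \<and> P 2 \<and> P 3 \<and> P 4"
  by (metis exhaust_4)

text \<open>Rigidity of \<open>D\<^sub>0\<close>: a state in \<open>\<Gamma>(4)\<close> whose kernel contains \<open>ker D\<^sub>0\<close> is
  \<open>\<Sum>\<^sub>i\<^sub>j K\<^sub>i\<^sub>j w\<^sub>i w\<^sub>j\<^sup>T\<close>, and the 32 partial-trace equations (16 entries of each
  marginal) form a linear system whose only solution is \<open>K = I/12\<close>.\<close>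
lemma D0_rigid:
  assumes aG: "a \<in> Gamma" and ker: "\<And>z. D0 *v z = 0 \<Longrightarrow> a *v z = 0"
  shows "a = D0"
proof -
  define K where "K i j = a $ pivot i $ pivot j" for i j
  have psd: "psd a" and marg: "marg1 a = mat (1/4)" "marg2 a = mat (1/4)"
    using aG by (simp_all add: Gamma_iff)
  have form: "a $ p $ q = (\<Sum>j<5. cell_vec j q * (\<Sum>i<5. cell_vec i p * K i j))" for p q
    unfolding K_def by (rule kernel_D0_form[OF psd_hermitian[OF psd] ker])
  have "\<forall>x y. (\<Sum>z\<in>UNIV. a $ (x,z) $ (y,z)) = mat (1/4) $ x $ y
             \<and> (\<Sum>z\<in>UNIV. a $ (z,x) $ (z,y)) = mat (1/4) $ x $ y"
    using marg[THEN arg_cong[where f="\<lambda>M. M $ _ $ _"]] by (simp add: marg1_def marg2_def)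
  note system = this[unfolded all_4 form sum_UNIV_4 sum_lessThan_5 cell_vec_def cells_def mat_def,
      simplified, unfolded complex_eq_iff, simplified]
  have "Re (K i j) = (if i = j then 1/12 else 0)" "Im (K i j) = 0" if "i < 5" "j < 5" for i j
    using less_5_cases[OF that(1)] less_5_cases[OF that(2)] system
    by (elim disjE; simp; linarith)+
  then have K: "K i j = (if i = j then 1/12 else 0)" if "i < 5" "j < 5" for i j
    using that by (simp add: complex_eq_iff)
  have "a $ p $ q = D0 $ p $ q" for p q
    unfolding form D0_def by (simp add: K sum_divide_distrib mult.commute if_distrib[where f="\<lambda>c. _ * c"] cong: if_cong)
  then show ?thesis by (simp add: vec_eq_iff)
qed

lemma D0_extreme: "D0 extreme_point_of Gamma"
  by (rule extreme_point_if_kernel_rigid[OF _ D0_Gamma D0_rigid]) (simp_all add: Gamma_iff)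

text \<open>\<open>MR(4) = 5\<close>: rank 6 or more is excluded because \<open>6\<^sup>2 > 2 \<cdot> 4\<^sup>2\<close>, and \<open>D\<^sub>0\<close> attains 5.\<close>
theorem theorem2p6:
  shows "(\<forall>D :: complex^(4\<times>4)^(4\<times>4). D extreme_point_of Gamma \<longrightarrow> rank D \<le> 5)
       \<and> (\<exists>D :: complex^(4\<times>4)^(4\<times>4). D extreme_point_of Gamma \<and> rank D = 5)"
proof (intro conjI allI impI)
  fix D :: "complex^(4\<times>4)^(4\<times>4)"
  assume extreme: "D extreme_point_of Gamma"
  show "rank D \<le> 5"
  proof (rule ccontr)
    assume "\<not> rank D \<le> 5"
    then have "CARD(6) \<le> rank D" by simp
    moreover have "D \<in> Gamma" using extreme by (simp add: extreme_point_of_def)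
    ultimately have "\<not> D extreme_point_of Gamma"
      by (intro large_rank_not_extreme[where 'r = 6]) simp_all
    then show False using extreme by contradiction
  qed
next
  show "\<exists>D :: complex^(4\<times>4)^(4\<times>4). D extreme_point_of Gamma \<and> rank D = 5"
    using D0_extreme rank_D0 by blast
qed

end
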